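(* Let $W$ be a vector lattice carrying a faithful positive linear functional $\psi$. Assume that $W$ is monotone sequentially complete, and that $V$ is a monotone sequentially closed subset of $W$. Then $W$ is monotone complete, and $V$ is monotone closed in $W$. Moreover, the following monotone selection principle holds: whenever $J$ is a non-empty upward directed subset of $V$ that is upper bounded in $W$, there exists an increasing sequence $(j_n)$ in $J$ with $\sup_n j_n = \sup J$ in $W$; in fact every increasing sequence $(j_n)$ in $J$ with $\sup_n \psi(j_n) = \sup_{j\in J}\psi(j)$ satisfies $\sup_n j_n = \sup J$ in $W$, and also $\sup_n j_n = \sup J$ in $V$.
   Context: Let $W$ be an ordered (real) vector space with positive cone $W_+$. $W$ is called monotone complete if every non-empty upward directed subset of $W$ that is bounded above has a supremum in $W$; $W$ is called monotone sequentially complete if every increasing sequence in $W$ that is bounded above has a supremum in $W$. If $W$ is monotone complete, a subset $V\subseteq W$ is called monotone closed in $W$ if $V$ contains the supremum in $W$ of every non-empty upward directed subset of $V$ that is upper bounded in $W$. If $W$ is monotone sequentially complete, $V\subseteq W$ is called monotone sequentially closed in $W$ if $V$ contains the supremum in $W$ of every increasing sequence in $V$ that is upper bounded in $W$. A positive linear functional $\psi$ on $W$ is called faithful if $\psi(a)>0$ for every $a\in W_+\setminus\{0\}$. *)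

theory Defs
  imports "HOL-Analysis.Analysis"
begin

text \<open>Ordered vector spaces are modelled by the type class ordered_real_vector;
  a vector lattice (Riesz space) is an ordered_real_vector whose order is a lattice.\<close>

definition upper_bound :: "'a::order set \<Rightarrow> 'a \<Rightarrow> bool" where
  "upper_bound S u \<longleftrightarrow> (\<forall>x\<in>S. x \<le> u)"

definition bounded_above :: "'a::order set \<Rightarrow> bool" where
  "bounded_above S \<longleftrightarrow> (\<exists>u. upper_bound S u)"

definition is_sup :: "'a::order set \<Rightarrow> 'a \<Rightarrow> bool" where
  "is_sup S s \<longleftrightarrow> upper_bound S s \<and> (\<forall>u. upper_bound S u \<longrightarrow> s \<le> u)"

definition is_sup_in :: "'a::order set \<Rightarrow> 'a set \<Rightarrow> 'a \<Rightarrow> bool" where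
  "is_sup_in V S s \<longleftrightarrow> s \<in> V \<and> upper_bound S s \<and> (\<forall>u\<in>V. upper_bound S u \<longrightarrow> s \<le> u)"

definition upward_directed :: "'a::order set \<Rightarrow> bool" where
  "upward_directed J \<longleftrightarrow> (\<forall>a\<in>J. \<forall>b\<in>J. \<exists>c\<in>J. a \<le> c \<and> b \<le> c)"

definition monotone_complete :: "'a::order itself \<Rightarrow> bool" where
  "monotone_complete _ \<longleftrightarrow>
     (\<forall>J::'a set. J \<noteq> {} \<and> upward_directed J \<and> bounded_above J \<longrightarrow> (\<exists>s. is_sup J s))"

definition monotone_seq_complete :: "'a::order itself \<Rightarrow> bool" where
  "monotone_seq_complete _ \<longleftrightarrow>
     (\<forall>f::nat \<Rightarrow> 'a. incseq f \<and> bounded_above (range f) \<longrightarrow> (\<exists>s. is_sup (range f) s))"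

definition monotone_closed :: "'a::order set \<Rightarrow> bool" where
  "monotone_closed V \<longleftrightarrow>
     (\<forall>J s. J \<noteq> {} \<and> J \<subseteq> V \<and> upward_directed J \<and> bounded_above J \<and> is_sup J s \<longrightarrow> s \<in> V)"

definition monotone_seq_closed :: "'a::order set \<Rightarrow> bool" where
  "monotone_seq_closed V \<longleftrightarrow>
     (\<forall>f s. incseq f \<and> range f \<subseteq> V \<and> bounded_above (range f) \<and> is_sup (range f) s \<longrightarrow> s \<in> V)"

definition positive_functional :: "('a::ordered_real_vector \<Rightarrow> real) \<Rightarrow> bool" where
  "positive_functional \<psi> \<longleftrightarrow> linear \<psi> \<and> (\<forall>a. 0 \<le> a \<longrightarrow> 0 \<le> \<psi> a)"

definition faithful :: "('a::ordered_real_vector \<Rightarrow> real) \<Rightarrow> bool" where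
  "faithful \<psi> \<longleftrightarrow> (\<forall>a. 0 \<le> a \<and> a \<noteq> 0 \<longrightarrow> 0 < \<psi> a)"

end

theory Submission
  imports Defs
begin

text \<open>Since J is bounded above and \<psi> is positive, the numbers \<psi> a (a \<in> J) have a real supremum \<alpha>.
  Directedness yields an increasing sequence (j n) in J with \<psi> (j n) \<rightarrow> \<alpha>, and by monotone
  sequential completeness it has a supremum s. For a \<in> J and every n, the positive part of
  a - s is dominated by sup a (j n) - j n, whose \<psi>-value is at most \<alpha> - \<psi> (j n). So the
  positive part has \<psi>-value 0 and vanishes by faithfulness, i.e. a \<le> s: s is the supremum of J.
  The same argument applies to every increasing sequence in J whose \<psi>-values approach \<alpha>;
  and since s is the supremum of a sequence in J, monotone closedness of V reduces to its
  sequential version.\<close>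

lemma positive_functional_diff:
  assumes "positive_functional \<psi>"
  shows "\<psi> (y - x) = \<psi> y - \<psi> x"
  using assms unfolding positive_functional_def by (simp add: linear_diff)

lemma positive_functional_mono:
  assumes "positive_functional \<psi>" and "x \<le> y"
  shows "\<psi> x \<le> \<psi> y"
proof -
  have "0 \<le> \<psi> (y - x)"
    using assms unfolding positive_functional_def by simp
  then show ?thesis
    using positive_functional_diff[OF assms(1)] by simp
qed

lemma is_sup_unique: "is_sup S s \<Longrightarrow> is_sup S t \<Longrightarrow> s = t"
  unfolding is_sup_def by (auto intro: order.antisym)

lemma is_sup_imp_bounded_above: "is_sup S s \<Longrightarrow> bounded_above S"
  unfolding is_sup_def bounded_above_def by blast

lemma is_sup_imp_is_sup_in: "is_sup S s \<Longrightarrow> s \<in> V \<Longrightarrow> is_sup_in V S s"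
  unfolding is_sup_def is_sup_in_def by blast

lemma is_sup_superset:
  assumes "is_sup S s" and "S \<subseteq> T" and "upper_bound T s"
  shows "is_sup T s"
  using assms unfolding is_sup_def upper_bound_def by blast

lemma monotone_seq_closedD:
  assumes "monotone_seq_closed V" and "incseq j" and "range j \<subseteq> V" and "is_sup (range j) s"
  shows "s \<in> V"
  using assms is_sup_imp_bounded_above unfolding monotone_seq_closed_def by blast

lemma monotone_seq_completeD:
  assumes "monotone_seq_complete TYPE('a::order)" and "incseq j"
    and "range j \<subseteq> J" and "bounded_above J"
  shows "\<exists>s. is_sup (range j :: 'a set) s"
  using assms unfolding monotone_seq_complete_def bounded_above_def upper_bound_def by blast

lemma upward_directed_incseq_above:
  assumes "upward_directed J" and "range x \<subseteq> J"
  shows "\<exists>j. incseq j \<and> range j \<subseteq> J \<and> (\<forall>n. x n \<le> j n)"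
proof -
  have "\<exists>j. \<forall>n. (j n \<in> J \<and> x n \<le> j n) \<and> j n \<le> j (Suc n)"
  proof (rule dependent_nat_choice)
    show "\<exists>c. c \<in> J \<and> x 0 \<le> c"
      using assms(2) by auto
    show "\<exists>d. (d \<in> J \<and> x (Suc n) \<le> d) \<and> c \<le> d" if "c \<in> J \<and> x n \<le> c" for c n
      using assms that unfolding upward_directed_def by blast
  qed
  then show ?thesis
    by (auto intro: incseq_SucI)
qed

lemma positive_part_diff_le:
  fixes a s t :: "'a::{ordered_ab_group_add, lattice}"
  assumes "t \<le> s"
  shows "sup (a - s) 0 \<le> sup a t - t"
proof (rule sup_least)
  have "a - s \<le> a - t"
    using assms by (simp add: diff_left_mono)
  also have "\<dots> \<le> sup a t - t"
    by (simp add: diff_right_mono)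
  finally show "a - s \<le> sup a t - t" .
qed simp

lemma is_sup_directed_if_exhausting:
  fixes \<psi> :: "'a::{ordered_real_vector, lattice} \<Rightarrow> real"
  assumes pf: "positive_functional \<psi>" and fa: "faithful \<psi>"
    and dir: "upward_directed J" and jJ: "range j \<subseteq> J" and s: "is_sup (range j) s"
    and bound: "\<forall>a\<in>J. \<psi> a \<le> \<alpha>" and exhaust: "\<forall>e>0. \<exists>n. \<alpha> - e < \<psi> (j n)"
  shows "is_sup J s"
proof -
  have "a \<le> s" if a: "a \<in> J" for a
  proof -
    define w where "w = sup (a - s) 0"
    have w_le: "\<psi> w \<le> \<alpha> - \<psi> (j n)" for n
    proof -
      obtain d where d: "d \<in> J" "a \<le> d" "j n \<le> d"
        using dir a jJ unfolding upward_directed_def by blast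
      have "j n \<le> s"
        using s unfolding is_sup_def upper_bound_def by auto
      then have "\<psi> w \<le> \<psi> (sup a (j n)) - \<psi> (j n)"
        unfolding w_def using positive_part_diff_le positive_functional_mono[OF pf]
          positive_functional_diff[OF pf] by metis
      moreover have "\<psi> (sup a (j n)) \<le> \<psi> d"
        using positive_functional_mono[OF pf] d by simp
      ultimately show ?thesis
        using bound d(1) by fastforce
    qed
    have "\<psi> w \<le> 0"
    proof (rule ccontr)
      assume "\<not> \<psi> w \<le> 0"
      then obtain n where "\<alpha> - \<psi> w < \<psi> (j n)"
        using exhaust by force
      with w_le[of n] show False by linarith
    qed
    moreover have "0 \<le> w"
      unfolding w_def by simp
    ultimately have "w = 0"
      using fa unfolding faithful_def by force
    then show "a \<le> s"
      unfolding w_def by (metis diff_le_0_iff_le sup_ge1)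
  qed
  then show ?thesis
    using is_sup_superset[OF s jJ] unfolding upper_bound_def by blast
qed

lemma upward_directed_exhausting_incseq:
  fixes \<psi> :: "'a::{ordered_real_vector, lattice} \<Rightarrow> real"
  assumes pf: "positive_functional \<psi>" and "J \<noteq> {}" and "upward_directed J"
    and bdd: "bdd_above (\<psi> ` J)"
  shows "\<exists>j. incseq j \<and> range j \<subseteq> J \<and> (\<forall>e>0. \<exists>n. (SUP a\<in>J. \<psi> a) - e < \<psi> (j n))"
proof -
  let ?\<alpha> = "SUP a\<in>J. \<psi> a"
  have "\<exists>a\<in>J. ?\<alpha> - inverse (real (Suc n)) < \<psi> a" for n
    using less_cSUP_iff[OF \<open>J \<noteq> {}\<close> bdd, of "?\<alpha> - inverse (real (Suc n))"] by simp
  then obtain x where x: "range x \<subseteq> J" "\<And>n. ?\<alpha> - inverse (real (Suc n)) < \<psi> (x n)"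
    by (metis image_subset_iff)
  then obtain j where j: "incseq j" "range j \<subseteq> J" "\<And>n. x n \<le> j n"
    using upward_directed_incseq_above \<open>upward_directed J\<close> by metis
  have "\<exists>n. ?\<alpha> - e < \<psi> (j n)" if "e > 0" for e
  proof -
    obtain n where "inverse (real (Suc n)) < e"
      using reals_Archimedean \<open>e > 0\<close> by blast
    moreover have "\<psi> (x n) \<le> \<psi> (j n)"
      using positive_functional_mono[OF pf j(3)] .
    ultimately have "?\<alpha> - e < \<psi> (j n)"
      using x(2)[of n] by linarith
    then show ?thesis ..
  qed
  with j show ?thesis by blast
qed

lemma bdd_above_functional_image:
  assumes "positive_functional \<psi>" and "bounded_above J"
  shows "bdd_above (\<psi> ` J)"
proof -
  obtain u where "\<forall>x\<in>J. x \<le> u"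
    using assms(2) unfolding bounded_above_def upper_bound_def by blast
  then show ?thesis
    by (intro bdd_aboveI2[of _ _ "\<psi> u"]) (simp add: positive_functional_mono[OF assms(1)])
qed

lemma exhausting_incseq_is_sup:
  fixes \<psi> :: "'a::{ordered_real_vector, lattice} \<Rightarrow> real"
  assumes pf: "positive_functional \<psi>" and fa: "faithful \<psi>"
    and msc: "monotone_seq_complete TYPE('a)"
    and dir: "upward_directed J" and ba: "bounded_above J"
    and j: "incseq j" "range j \<subseteq> J"
    and exhaust: "\<forall>e>0. \<exists>n. (SUP a\<in>J. \<psi> a) - e < \<psi> (j n)"
  shows "\<exists>s. is_sup (range j) s \<and> is_sup J s"
proof -
  obtain s where s: "is_sup (range j) s"
    using monotone_seq_completeD[OF msc j ba] by blast
  have "\<forall>a\<in>J. \<psi> a \<le> (SUP a\<in>J. \<psi> a)"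
    using bdd_above_functional_image[OF pf ba] by (simp add: cSUP_upper)
  then show ?thesis
    using s is_sup_directed_if_exhausting[OF pf fa dir j(2) s _ exhaust] by blast
qed

lemma SUP_eq_imp_exhausting:
  fixes f :: "nat \<Rightarrow> real"
  assumes "bdd_above (range f)" and "(SUP n. f n) = \<alpha>"
  shows "\<forall>e>0. \<exists>n. \<alpha> - e < f n"
proof (intro allI impI)
  fix e :: real
  assume "e > 0"
  then have "\<alpha> - e < (SUP n. f n)"
    using assms(2) by simp
  then show "\<exists>n. \<alpha> - e < f n"
    using less_cSUP_iff[OF UNIV_not_empty assms(1)] by simp
qed

lemma monotone_selection:
  fixes \<psi> :: "'a::{ordered_real_vector, lattice} \<Rightarrow> real"
  assumes pf: "positive_functional \<psi>" and fa: "faithful \<psi>"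
    and msc: "monotone_seq_complete TYPE('a)"
    and ne: "J \<noteq> {}" and dir: "upward_directed J" and ba: "bounded_above J"
  shows "\<exists>s. is_sup J s
             \<and> (\<exists>j. incseq j \<and> range j \<subseteq> J \<and> is_sup (range j) s)
             \<and> (\<forall>j. incseq j \<and> range j \<subseteq> J \<and> (SUP n. \<psi> (j n)) = (SUP a\<in>J. \<psi> a)
                    \<longrightarrow> is_sup (range j) s)"
proof -
  have bdd: "bdd_above (\<psi> ` J)"
    using bdd_above_functional_image[OF pf ba] .
  obtain j where j: "incseq j" "range j \<subseteq> J"
    and exhaust: "\<forall>e>0. \<exists>n. (SUP a\<in>J. \<psi> a) - e < \<psi> (j n)"
    using upward_directed_exhausting_incseq[OF pf ne dir bdd] by blast
  then obtain s where s: "is_sup (range j) s" "is_sup J s"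
    using exhausting_incseq_is_sup[OF pf fa msc dir ba] by blast
  have "is_sup (range k) s"
    if k: "incseq k" "range k \<subseteq> J" "(SUP n. \<psi> (k n)) = (SUP a\<in>J. \<psi> a)" for k
  proof -
    have "range (\<lambda>n. \<psi> (k n)) \<subseteq> \<psi> ` J"
      using k(2) by auto
    then have "bdd_above (range (\<lambda>n. \<psi> (k n)))"
      by (rule bdd_above_mono[OF bdd])
    then have "\<forall>e>0. \<exists>n. (SUP a\<in>J. \<psi> a) - e < \<psi> (k n)"
      using SUP_eq_imp_exhausting k(3) by blast
    then obtain t where "is_sup (range k) t" "is_sup J t"
      using exhausting_incseq_is_sup[OF pf fa msc dir ba k(1,2)] by blast
    then show ?thesis
      using is_sup_unique[OF s(2)] by simp
  qed
  then show ?thesis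
    using s j by blast
qed

theorem mainTheorem1:
  fixes \<psi> :: "'a::{ordered_real_vector, lattice} \<Rightarrow> real"
    and V :: "'a set"
  assumes "positive_functional \<psi>" and "faithful \<psi>"
    and "monotone_seq_complete TYPE('a)"
    and "monotone_seq_closed V"
  shows "monotone_complete TYPE('a)
    \<and> monotone_closed V
    \<and> (\<forall>J. J \<noteq> {} \<and> J \<subseteq> V \<and> upward_directed J \<and> bounded_above J \<longrightarrow>
           (\<exists>s. is_sup J s
             \<and> (\<exists>j. incseq j \<and> range j \<subseteq> J \<and> is_sup (range j) s)
             \<and> (\<forall>j. incseq j \<and> range j \<subseteq> J \<and> (SUP n. \<psi> (j n)) = (SUP a\<in>J. \<psi> a)
                    \<longrightarrow> is_sup (range j) s \<and> is_sup_in V (range j) s)))"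
proof (intro conjI allI impI)
  note selection = monotone_selection[OF assms(1-3)]
  note closed = monotone_seq_closedD[OF assms(4)]
  show "monotone_complete TYPE('a)"
    unfolding monotone_complete_def using selection by blast
  show "monotone_closed V"
    unfolding monotone_closed_def
  proof (intro allI impI)
    fix J s assume J: "J \<noteq> {} \<and> J \<subseteq> V \<and> upward_directed J \<and> bounded_above J \<and> is_sup J s"
    then obtain t j where "is_sup J t" "incseq j" "range j \<subseteq> J" "is_sup (range j) t"
      using selection[of J] by blast
    moreover have "t = s"
      using J is_sup_unique[OF \<open>is_sup J t\<close>] by blast
    ultimately show "s \<in> V"
      using J closed[of j s] by blast
  qed
  fix J assume J: "J \<noteq> {} \<and> J \<subseteq> V \<and> upward_directed J \<and> bounded_above J"
  then obtain s where s: "is_sup J s" "\<exists>j. incseq j \<and> range j \<subseteq> J \<and> is_sup (range j) s"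
    and exhausting: "\<And>j. incseq j \<and> range j \<subseteq> J \<and> (SUP n. \<psi> (j n)) = (SUP a\<in>J. \<psi> a)
                      \<Longrightarrow> is_sup (range j) s"
    using selection[of J] by blast
  have "is_sup_in V (range j) s"
    if "incseq j \<and> range j \<subseteq> J \<and> (SUP n. \<psi> (j n)) = (SUP a\<in>J. \<psi> a)" for j
    using that J exhausting[OF that] closed[of j s] is_sup_imp_is_sup_in by blast
  with s exhausting show "\<exists>s. is_sup J s
             \<and> (\<exists>j. incseq j \<and> range j \<subseteq> J \<and> is_sup (range j) s)
             \<and> (\<forall>j. incseq j \<and> range j \<subseteq> J \<and> (SUP n. \<psi> (j n)) = (SUP a\<in>J. \<psi> a)
                    \<longrightarrow> is_sup (range j) s \<and> is_sup_in V (range j) s)"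
    by blast
qed

end
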